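(* Let $p,q$ be positive integers with $\gcd(p,q)=1$, $q$ odd and $2p/q-1\in(-1,1)$. Then \[ \mathcal{O}(2p/q)=\{(-1)^sA\big((4\ell+2p-2s-q)^2/q^2\big):\ s\in\{0,1\},\ \ell\in\mathbb{Z},\ s-p+1\le2\ell\le s-p+q-1\} \] and \[ \mathcal{E}(2p/q)=\{(-1)^sA\big((4\ell-2s-q)^2/q^2\big):\ s\in\{0,1\},\ \ell\in\mathbb{Z},\ s+1\le2\ell\le s+q-1\}. \]
   Context: Nodes: $x_{k,n}:=2k/n-1$, $k=0,\dots,n$; $D_n(x)=\sum_{k=0}^n(-1)^k\frac{1}{x-x_{k,n}}$. $A(y)=\sum_{k=0}^\infty(-1)^k\frac{4k+2}{(2k+1)^2-y}$ for $y\in[0,1)$. A sequence $n_j$ is a strictly increasing map $\mathbb{N}\to\mathbb{N}$, odd (even) if all $n_j$ are odd (even); $x$ is regular for $n_j$ if there is $j_0$ with $x\notin\{x_{0,n_j},\dots,x_{n_j,n_j}\}$ for $j\ge j_0$. For a rational $r$ with $x=r-1\in(-1,1)$, $\mathcal{O}(r)$ is the set of $L\in\overline{\mathbb{R}}=\mathbb{R}\cup\{\pm\infty\}$ such that $\lim_{j\to\infty}D_{n_j}(x)/n_j=L$ for some odd sequence $n_j$ for which $x$ is regular; $\mathcal{E}(r)$ is defined likewise with even sequences. *)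

theory Defs
  imports "HOL-Analysis.Analysis" "HOL-Library.Extended_Real"
begin

definition node :: "nat \<Rightarrow> nat \<Rightarrow> real" where
  "node n k = 2 * real k / real n - 1"

definition Dn :: "nat \<Rightarrow> real \<Rightarrow> real" where
  "Dn n x = (\<Sum>k\<le>n. (-1) ^ k * (1 / (x - node n k)))"

definition A :: "real \<Rightarrow> real" where
  "A y = (\<Sum>k. (-1) ^ k * ((4 * real k + 2) / ((2 * real k + 1)^2 - y)))"

definition regular :: "(nat \<Rightarrow> nat) \<Rightarrow> real \<Rightarrow> bool" where
  "regular n x \<longleftrightarrow> (\<exists>j0. \<forall>j\<ge>j0. x \<notin> {node (n j) k | k. k \<le> n j})"

definition Oset :: "real \<Rightarrow> ereal set" where
  "Oset r = {L. \<exists>n. strict_mono n \<and> (\<forall>j. odd (n j)) \<and> regular n (r - 1) \<and>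
      ((\<lambda>j. ereal (Dn (n j) (r - 1) / real (n j))) \<longlongrightarrow> L) sequentially}"

definition Eset :: "real \<Rightarrow> ereal set" where
  "Eset r = {L. \<exists>n. strict_mono n \<and> (\<forall>j. even (n j)) \<and> regular n (r - 1) \<and>
      ((\<lambda>j. ereal (Dn (n j) (r - 1) / real (n j))) \<longlongrightarrow> L) sequentially}"

end

theory Submission
  imports Defs "HOL-Real_Asymp.Real_Asymp" "HOL-Number_Theory.Cong"
begin

(*
  Let x = 2p/q - 1 and p n = q m + r with 0 \<le> r < q.  The distance from x to the node x_{k,n}
  is 2 (m + r/q - k) / n, so splitting D_n(x)/n at k = m gives (-1)^m/2 times the sum of two
  partial sums of the alternating series S(c) = sum_j (-1)^j / (j + c), at c = r/q and 1 - r/q.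
  Along n with fixed residue r \<noteq> 0 (x is not a node) both partial sums converge, and the
  partial-fraction identity A((2c - 1)^2) = (S(c) + S(1 - c)) / 2 identifies the limit as
  (-1)^m A((2r/q - 1)^2).  Since q is odd, m has the parity of p n + r, which is fixed once the
  parity of n is.  A convergent regular sequence has a subsequence of constant residue, and
  every residue 0 < r < q is attained by n of either parity.
*)

definition alt_recip_sum :: "real \<Rightarrow> nat \<Rightarrow> real" where
  "alt_recip_sum c N = (\<Sum>j<N. (-1) ^ j / (real j + c))"

lemma summable_alt_recip:
  assumes "0 < c"
  shows "summable (\<lambda>j. (-1) ^ j / (real j + c))"
proof -
  have "summable (\<lambda>j. (-1) ^ j * (1 / (real j + c)))"
  proof (rule summable_Leibniz'(1))
    show "(\<lambda>n. 1 / (real n + c)) \<longlonglongrightarrow> 0" by real_asymp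
  qed (use assms in \<open>auto simp: frac_le\<close>)
  then show ?thesis by simp
qed

lemma alt_recip_sum_tendsto:
  assumes "0 < c" and "filterlim N at_top F"
  shows "((\<lambda>x. alt_recip_sum c (N x)) \<longlongrightarrow> (\<Sum>j. (-1) ^ j / (real j + c))) F"
  unfolding alt_recip_sum_def
  using filterlim_compose[OF summable_LIMSEQ[OF summable_alt_recip[OF assms(1)]] assms(2)] by simp

lemma A_eq_alt_recip_suminf:
  assumes "0 < c" "c < 1"
  shows "A ((2 * c - 1)^2)
    = ((\<Sum>j. (-1) ^ j / (real j + c)) + (\<Sum>j. (-1) ^ j / (real j + (1 - c)))) / 2"
proof -
  have partial_fractions: "(-1) ^ k * ((4 * real k + 2) / ((2 * real k + 1)^2 - (2 * c - 1)^2))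
     = ((-1) ^ k / (real k + c) + (-1) ^ k / (real k + (1 - c))) / 2" for k
  proof -
    define a b where "a = real k + c" and "b = real k + (1 - c)"
    have "a > 0" "b > 0" using assms by (auto simp: a_def b_def)
    have "(4 * real k + 2) / ((2 * real k + 1)^2 - (2 * c - 1)^2) = 2 * (a + b) / (4 * a * b)"
      by (simp add: a_def b_def power2_eq_square algebra_simps)
    also have "\<dots> = (1 / a + 1 / b) / 2"
      using \<open>a > 0\<close> \<open>b > 0\<close> by (simp add: field_simps)
    finally have fraction: "(4 * real k + 2) / ((2 * real k + 1)^2 - (2 * c - 1)^2)
        = (1 / (real k + c) + 1 / (real k + (1 - c))) / 2"
      by (simp add: a_def b_def)
    show ?thesis unfolding fraction by (simp add: distrib_left)
  qed
  have "A ((2 * c - 1)^2) = (\<Sum>k. ((-1) ^ k / (real k + c) + (-1) ^ k / (real k + (1 - c))) / 2)"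
    unfolding A_def partial_fractions ..
  also have "\<dots> = ((\<Sum>j. (-1) ^ j / (real j + c)) + (\<Sum>j. (-1) ^ j / (real j + (1 - c)))) / 2"
    using assms by (simp add: suminf_divide suminf_add summable_add summable_alt_recip)
  finally show ?thesis .
qed

lemma minus_one_power_diff:
  "i \<le> m \<Longrightarrow> (-1 :: real) ^ (m - i) = (-1) ^ m * (-1) ^ i"
  by (auto simp: minus_one_power_iff)

lemma alt_recip_sum_split:
  assumes "m \<le> n"
  shows "(\<Sum>k\<le>n. (-1) ^ k / (2 * (real m + c - real k)))
    = (-1) ^ m / 2 * (alt_recip_sum c (Suc m) + alt_recip_sum (1 - c) (n - m))"
proof -
  let ?f = "\<lambda>k. (-1) ^ k / (2 * (real m + c - real k)) :: real"
  have "sum ?f {..n} = sum ?f {0..m} + sum ?f {Suc m..<Suc n}"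
    using sum.atLeastLessThan_concat[of 0 "Suc m" "Suc n" ?f] assms
    by (simp add: atLeast0LessThan atLeast0AtMost lessThan_Suc_atMost)
  moreover have "sum ?f {0..m} = (-1) ^ m / 2 * alt_recip_sum c (Suc m)"
  proof -
    have "sum ?f {0..m} = (\<Sum>i=0..m. ?f (m - i))"
      using sum.atLeastAtMost_rev[of ?f 0 m] by simp
    also have "\<dots> = (\<Sum>i<Suc m. (-1) ^ m / 2 * ((-1) ^ i / (real i + c)))"
      by (intro sum.cong) (auto simp: minus_one_power_diff of_nat_diff)
    finally show ?thesis unfolding alt_recip_sum_def sum_distrib_left .
  qed
  moreover have "sum ?f {Suc m..<Suc n} = (-1) ^ m / 2 * alt_recip_sum (1 - c) (n - m)"
  proof -
    have "sum ?f {Suc m..<Suc n} = (\<Sum>i<n - m. ?f (i + Suc m))"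
      using sum.shift_bounds_nat_ivl[of ?f 0 "Suc m" "n - m"] assms
      by (simp add: atLeast0LessThan)
    also have "\<dots> = (\<Sum>i<n - m. (-1) ^ m / 2 * ((-1) ^ i / (real i + (1 - c))))"
    proof (intro sum.cong refl)
      fix i
      show "?f (i + Suc m) = (-1) ^ m / 2 * ((-1) ^ i / (real i + (1 - c)))"
        by (simp add: power_add minus_divide_right algebra_simps)
    qed
    finally show ?thesis unfolding alt_recip_sum_def sum_distrib_left .
  qed
  ultimately show ?thesis by (simp add: algebra_simps)
qed

lemma Dn_ratio_eq_alt_recip_sums:
  assumes "q > 0" "n > 0" "p * n = q * m + r" "m \<le> n"
  shows "Dn n (2 * real p / real q - 1) / real n
     = (-1) ^ m / 2 * (alt_recip_sum (real r / real q) (Suc m) + alt_recip_sum (1 - real r / real q) (n - m))"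
proof -
  have "real p * real n = real q * real m + real r"
    using assms(3) by (metis of_nat_add of_nat_mult)
  then have node_gap: "2 * real p / real q - 1 - node n k = 2 * (real m + real r / real q - real k) / real n" for k
    using assms(1,2) unfolding node_def by (simp add: field_simps)
  have "Dn n (2 * real p / real q - 1) / real n
      = (\<Sum>k\<le>n. (-1) ^ k / (2 * (real m + real r / real q - real k)))"
    unfolding Dn_def node_gap sum_divide_distrib using assms(2) by simp
  also have "\<dots> = (-1) ^ m / 2 *
      (alt_recip_sum (real r / real q) (Suc m) + alt_recip_sum (1 - real r / real q) (n - m))"
    by (rule alt_recip_sum_split[OF assms(4)])
  finally show ?thesis .
qed

lemma minus_one_power_quotient:
  assumes "odd q" "p * n = q * m + r"
  shows "(-1 :: real) ^ m = (-1) ^ (r + (if odd n then p else 0))"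
proof -
  have "even m \<longleftrightarrow> even (p * n + r)"
    using assms by auto
  also have "\<dots> \<longleftrightarrow> even (r + (if odd n then p else 0))"
    by auto
  finally show ?thesis by (simp add: minus_one_power_iff)
qed

lemma filterlim_at_top_scaled_bound:
  fixes g h :: "'a \<Rightarrow> nat"
  assumes "filterlim g at_top F" "q > 0" "\<And>x. g x \<le> q * h x"
  shows "filterlim h at_top F"
  unfolding filterlim_at_top
proof
  fix Z
  have "eventually (\<lambda>x. q * Z \<le> g x) F"
    using assms(1) unfolding filterlim_at_top by blast
  then show "eventually (\<lambda>x. Z \<le> h x) F"
    by eventually_elim (use assms(2,3) order_trans in fastforce)
qed

(* The offset a is p for odd n and 0 for even n; it records the parity of p n. *)
definition limit_value :: "nat \<Rightarrow> nat \<Rightarrow> nat \<Rightarrow> real" where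
  "limit_value q a r = (-1) ^ (r + a) * A ((2 * real r / real q - 1)^2)"

lemma limit_value_eq_alt_recip_suminf:
  assumes "0 < r" "r < q"
  shows "limit_value q a r = (-1) ^ (r + a) / 2 *
    ((\<Sum>j. (-1) ^ j / (real j + real r / real q)) + (\<Sum>j. (-1) ^ j / (real j + (1 - real r / real q))))"
proof -
  have "2 * real r / real q - 1 = 2 * (real r / real q) - 1" by simp
  then show ?thesis
    using A_eq_alt_recip_suminf[of "real r / real q"] assms unfolding limit_value_def by simp
qed

lemma Dn_ratio_tendsto_limit_value:
  assumes "0 < p" "p < q" "odd q" "0 < r" "r < q"
    and n: "filterlim n at_top sequentially"
    and residue: "\<And>j. p * n j mod q = r" and parity: "\<And>j. odd (n j) = b"
  shows "(\<lambda>j. Dn (n j) (2 * real p / real q - 1) / real (n j))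
    \<longlonglongrightarrow> limit_value q (if b then p else 0) r"
proof -
  define m where "m j = p * n j div q" for j
  define c where "c = real r / real q"
  have division: "p * n j = q * m j + r" for j
    using residue[of j] unfolding m_def by (metis div_mult_mod_eq mult.commute)
  have room: "q * m j + n j \<le> q * n j" for j
  proof -
    have "q * m j + n j \<le> p * n j + n j" using division[of j] by linarith
    also have "\<dots> \<le> q * n j" using mult_le_mono1[of "Suc p" q "n j"] assms(2) by simp
    finally show ?thesis .
  qed
  have m_le: "m j \<le> n j" for j
    using add_leD1[OF room[of j]] assms(1,2) by simp
  have "n j \<le> q * (n j - m j)" for j
    using room[of j] by (simp add: diff_mult_distrib2)
  then have m_complement: "filterlim (\<lambda>j. n j - m j) at_top sequentially"
    using assms(2) by (intro filterlim_at_top_scaled_bound[OF n, of q]) auto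
  have "n j \<le> q * Suc (m j)" for j
  proof -
    have "n j \<le> p * n j" using assms(1) by simp
    also have "\<dots> \<le> q * Suc (m j)" using division[of j] assms(5) by simp
    finally show ?thesis .
  qed
  then have m: "filterlim (\<lambda>j. Suc (m j)) at_top sequentially"
    using assms(2) by (intro filterlim_at_top_scaled_bound[OF n, of q]) auto
  have sign: "(-1) ^ m j = (-1 :: real) ^ (r + (if b then p else 0))" for j
    using minus_one_power_quotient[OF assms(3) division[of j]] parity[of j] by simp
  have "(\<lambda>j. (-1) ^ (r + (if b then p else 0)) / 2 *
      (alt_recip_sum c (Suc (m j)) + alt_recip_sum (1 - c) (n j - m j)))
    \<longlonglongrightarrow> limit_value q (if b then p else 0) r"
    unfolding limit_value_eq_alt_recip_suminf[OF assms(4,5)] c_def[symmetric]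
    using assms(4,5) by (intro tendsto_intros alt_recip_sum_tendsto m m_complement) (auto simp: c_def)
  moreover have "eventually (\<lambda>j. Suc 0 \<le> n j) sequentially"
    using n unfolding filterlim_at_top by blast
  then have "eventually (\<lambda>j. (-1) ^ (r + (if b then p else 0)) / 2 *
      (alt_recip_sum c (Suc (m j)) + alt_recip_sum (1 - c) (n j - m j))
      = Dn (n j) (2 * real p / real q - 1) / real (n j)) sequentially"
    by eventually_elim
      (use Dn_ratio_eq_alt_recip_sums[OF _ _ division m_le] sign assms(2) in \<open>simp add: c_def Suc_le_eq\<close>)
  ultimately show ?thesis by (rule Lim_transform_eventually)
qed

lemma mem_nodes_iff_dvd:
  assumes "0 < q" "p \<le> q" "coprime p q" "0 < n"
  shows "2 * real p / real q - 1 \<in> {node n k | k. k \<le> n} \<longleftrightarrow> q dvd n"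
proof
  assume "2 * real p / real q - 1 \<in> {node n k | k. k \<le> n}"
  then obtain k where "2 * real p / real q - 1 = 2 * real k / real n - 1"
    unfolding node_def by auto
  then have "real (p * n) = real (k * q)" using assms(1,4) by (simp add: field_simps)
  then have "p * n = k * q" by (simp only: of_nat_eq_iff)
  then have "q dvd p * n" by simp
  then show "q dvd n" using assms(3) by (simp add: coprime_dvd_mult_right_iff coprime_commute)
next
  assume "q dvd n"
  then obtain t where t: "n = q * t" by auto
  then have "node n (p * t) = 2 * real p / real q - 1"
    using assms(1,4) unfolding node_def by (simp add: field_simps)
  moreover have "p * t \<le> n" using t assms(2) by simp
  ultimately show "2 * real p / real q - 1 \<in> {node n k | k. k \<le> n}" by force
qed

lemma regular_iff_eventually_not_dvd:
  assumes "0 < q" "p \<le> q" "coprime p q" "strict_mono n"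
  shows "regular n (2 * real p / real q - 1) \<longleftrightarrow> (\<forall>\<^sub>F j in sequentially. \<not> q dvd n j)"
proof -
  have not_node: "2 * real p / real q - 1 \<notin> {node (n j) k | k. k \<le> n j} \<longleftrightarrow> \<not> q dvd n j"
    if "1 \<le> j" for j
    using mem_nodes_iff_dvd[OF assms(1-3)] seq_suble[OF assms(4), of j] that by simp
  show ?thesis unfolding regular_def eventually_sequentially
  proof
    assume "\<exists>j0. \<forall>j\<ge>j0. 2 * real p / real q - 1 \<notin> {node (n j) k | k. k \<le> n j}"
    then obtain j0 where "\<forall>j\<ge>j0. 2 * real p / real q - 1 \<notin> {node (n j) k | k. k \<le> n j}" ..
    then show "\<exists>j0. \<forall>j\<ge>j0. \<not> q dvd n j"
      using not_node by (intro exI[of _ "max j0 1"]) auto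
  next
    assume "\<exists>j0. \<forall>j\<ge>j0. \<not> q dvd n j"
    then obtain j0 where "\<forall>j\<ge>j0. \<not> q dvd n j" ..
    then show "\<exists>j0. \<forall>j\<ge>j0. 2 * real p / real q - 1 \<notin> {node (n j) k | k. k \<le> n j}"
      using not_node by (intro exI[of _ "max j0 1"]) auto
  qed
qed

lemma exists_residue_with_parity:
  assumes "coprime p q" "odd q" "r < q"
  obtains n :: nat where "0 < n" "p * n mod q = r" "odd n = b"
proof -
  obtain x where "[p * x = 1] (mod q)" using cong_solve_coprime_nat[OF assms(1)] by auto
  then have "[p * x * r = 1 * r] (mod q)" by (rule cong_scalar_right)
  then have "p * x * r mod q = r" using assms(3) unfolding cong_def by simp
  then have residue: "p * (x * r + t * q) mod q = r" for t
    by (simp add: distrib_left mult.assoc[symmetric])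
  define t :: nat where "t = (if odd (x * r + q) = b then 1 else 2)"
  have "0 < x * r + t * q"
    using odd_pos[OF assms(2)] by (simp add: t_def)
  moreover have "odd (x * r + t * q) = b"
    using assms(2) by (cases "odd (x * r + q) = b") (simp_all add: t_def)
  ultimately show ?thesis by (rule that[OF _ residue])
qed

lemma eventually_in_finite_imp_constant_subseq:
  fixes f :: "nat \<Rightarrow> 'a"
  assumes "finite F" "eventually (\<lambda>j. f j \<in> F) sequentially"
  obtains s :: "nat \<Rightarrow> nat" and v where "strict_mono s" "v \<in> F" "\<And>k. f (s k) = v"
proof -
  define J where "J = {j. f j \<in> F}"
  obtain N where "\<forall>j\<ge>N. f j \<in> F" using assms(2) unfolding eventually_sequentially ..
  then have "{N..} \<subseteq> J" unfolding J_def by auto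
  then have "infinite J" using infinite_Ici by (rule infinite_super)
  moreover have "finite (f ` J)" using assms(1) unfolding J_def by (rule finite_subset[rotated]) auto
  ultimately have "\<exists>j1\<in>J. infinite {j \<in> J. f j = f j1}" by (rule pigeonhole_infinite)
  then obtain j1 where "j1 \<in> J" and "infinite {j \<in> J. f j = f j1}" ..
  then obtain s :: "nat \<Rightarrow> nat" where "strict_mono s" "\<forall>k. s k \<in> {j \<in> J. f j = f j1}"
    using infinite_enumerate by blast
  moreover have "f j1 \<in> F" using \<open>j1 \<in> J\<close> unfolding J_def by simp
  ultimately show ?thesis using that[of s "f j1"] by simp
qed

lemma limit_of_Dn_ratio_is_limit_value:
  assumes pq: "0 < p" "p < q" "coprime p q" "odd q"
    and n: "strict_mono n" "\<And>j. odd (n j) = b" "regular n (2 * real p / real q - 1)"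
    and lim: "(\<lambda>j. ereal (Dn (n j) (2 * real p / real q - 1) / real (n j))) \<longlonglongrightarrow> L"
  obtains r where "0 < r" "r < q" "L = ereal (limit_value q (if b then p else 0) r)"
proof -
  have "eventually (\<lambda>j. \<not> q dvd n j) sequentially"
    using regular_iff_eventually_not_dvd[OF _ _ pq(3) n(1)] n(3) pq(2) by simp
  then have residues: "eventually (\<lambda>j. p * n j mod q \<in> {0<..<q}) sequentially"
  proof eventually_elim
    case (elim j)
    then have "\<not> q dvd p * n j" using pq(3) by (simp add: coprime_dvd_mult_right_iff coprime_commute)
    then show ?case using pq(2) by (simp add: mod_greater_zero_iff_not_dvd)
  qed
  obtain s :: "nat \<Rightarrow> nat" and r where s: "strict_mono s" and r: "r \<in> {0<..<q}"
    and residue: "\<And>k. p * n (s k) mod q = r"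
    using eventually_in_finite_imp_constant_subseq[OF finite_greaterThanLessThan residues] by blast
  have "filterlim (n \<circ> s) at_top sequentially"
    using filterlim_subseq[OF strict_mono_o[OF n(1) s]] by simp
  then have "(\<lambda>k. Dn (n (s k)) (2 * real p / real q - 1) / real (n (s k)))
      \<longlonglongrightarrow> limit_value q (if b then p else 0) r"
    using Dn_ratio_tendsto_limit_value[OF pq(1,2,4), of r "n \<circ> s"] r residue n(2) by simp
  moreover have "(\<lambda>k. ereal (Dn (n (s k)) (2 * real p / real q - 1) / real (n (s k)))) \<longlonglongrightarrow> L"
    using LIMSEQ_subseq_LIMSEQ[OF lim s] by (simp add: comp_def)
  ultimately have "L = ereal (limit_value q (if b then p else 0) r)"
    using LIMSEQ_unique tendsto_ereal by blast
  then show ?thesis using that[of r] r by simp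
qed

lemma limit_value_is_limit_of_Dn_ratio:
  assumes pq: "0 < p" "p < q" "coprime p q" "odd q" and r: "0 < r" "r < q"
  shows "\<exists>n. strict_mono n \<and> (\<forall>j. odd (n j) = b) \<and> regular n (2 * real p / real q - 1) \<and>
    (\<lambda>j. ereal (Dn (n j) (2 * real p / real q - 1) / real (n j)))
      \<longlonglongrightarrow> ereal (limit_value q (if b then p else 0) r)"
proof -
  obtain n0 where n0: "0 < n0" "p * n0 mod q = r" "odd n0 = b"
    using exists_residue_with_parity[OF pq(3,4) r(2)] .
  define n where "n j = n0 + 2 * q * j" for j
  have "strict_mono n" unfolding n_def strict_mono_def using pq by simp
  moreover have parity: "odd (n j) = b" for j unfolding n_def using n0(3) by simp
  moreover have residue: "p * n j mod q = r" for j
  proof -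
    have "p * n j = p * n0 + (2 * p * j) * q" unfolding n_def by (simp add: algebra_simps)
    then show ?thesis using n0(2) by simp
  qed
  moreover have "\<not> q dvd n j" for j
  proof
    assume "q dvd n j"
    then have "p * n j mod q = 0" by simp
    then show False using residue[of j] r(1) by simp
  qed
  then have "regular n (2 * real p / real q - 1)"
    using regular_iff_eventually_not_dvd[OF _ _ pq(3) \<open>strict_mono n\<close>] pq(2) by simp
  moreover have "filterlim n at_top sequentially"
    using filterlim_subseq[OF \<open>strict_mono n\<close>] by simp
  then have "(\<lambda>j. Dn (n j) (2 * real p / real q - 1) / real (n j))
      \<longlonglongrightarrow> limit_value q (if b then p else 0) r"
    by (rule Dn_ratio_tendsto_limit_value[OF pq(1,2,4) r _ residue parity])
  ultimately show ?thesis by (intro exI[of _ n] conjI allI tendsto_ereal)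
qed

lemma Dn_ratio_limit_set:
  assumes "0 < p" "p < q" "coprime p q" "odd q"
  shows "{L. \<exists>n. strict_mono n \<and> (\<forall>j. odd (n j) = b) \<and> regular n (2 * real p / real q - 1) \<and>
      (\<lambda>j. ereal (Dn (n j) (2 * real p / real q - 1) / real (n j))) \<longlonglongrightarrow> L}
    = {ereal (limit_value q (if b then p else 0) r) | r. 0 < r \<and> r < q}"
    (is "?lhs = ?rhs")
proof (intro equalityI subsetI)
  fix L assume "L \<in> ?lhs"
  then obtain n where "strict_mono n" "\<And>j. odd (n j) = b" "regular n (2 * real p / real q - 1)"
    "(\<lambda>j. ereal (Dn (n j) (2 * real p / real q - 1) / real (n j))) \<longlonglongrightarrow> L"
    by auto
  then obtain r where "0 < r" "r < q" "L = ereal (limit_value q (if b then p else 0) r)"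
    by (rule limit_of_Dn_ratio_is_limit_value[OF assms])
  then show "L \<in> ?rhs" by auto
next
  fix L assume "L \<in> ?rhs"
  then obtain r where "0 < r" "r < q" "L = ereal (limit_value q (if b then p else 0) r)" by auto
  then show "L \<in> ?lhs" using limit_value_is_limit_of_Dn_ratio[OF assms] by simp
qed

lemma limit_value_set_reparametrized:
  assumes "0 < q"
  shows "{ereal (limit_value q a r) | r. 0 < r \<and> r < q}
    = {ereal ((-1) ^ s * A ((of_int (4 * l + 2 * int a - 2 * int s - int q))^2 / (real q)^2)) | s l.
         s \<in> {0, 1} \<and> int s - int a + 1 \<le> 2 * l \<and> 2 * l \<le> int s - int a + int q - 1}"
    (is "?lhs = ?rhs")
proof -
  have reparametrized: "limit_value q a r = (-1) ^ s * A ((of_int (4 * l + 2 * int a - 2 * int s - int q))^2 / (real q)^2)"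
    if "int r = 2 * l + int a - int s" "s \<in> {0, 1}" for r s l
  proof -
    have "even (r + a) \<longleftrightarrow> even s" using that(1) by presburger
    then have sign: "(-1 :: real) ^ (r + a) = (-1) ^ s" using that(2) by (auto simp: minus_one_power_iff)
    have numerator: "4 * l + 2 * int a - 2 * int s - int q = 2 * int r - int q" using that(1) by simp
    have square: "(of_int (2 * int r - int q))^2 / (real q)^2 = (2 * real r / real q - 1)^2"
    proof -
      have "2 * real r / real q - 1 = (2 * real r - real q) / real q" using assms by (simp add: field_simps)
      then show ?thesis by (simp add: power_divide)
    qed
    show ?thesis unfolding limit_value_def by (simp only: numerator square sign)
  qed
  show ?thesis
  proof (intro equalityI subsetI)
    fix L assume "L \<in> ?lhs"
    then obtain r where r: "0 < r" "r < q" and L: "L = ereal (limit_value q a r)" by blast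
    define s :: nat where "s = (if even (r + a) then 0 else 1)"
    define l :: int where "l = (int r + int s - int a) div 2"
    have "even (int r + int s - int a)" unfolding s_def by simp
    then have r_eq: "int r = 2 * l + int a - int s" unfolding l_def by simp
    have "s \<in> {0, 1}" unfolding s_def by simp
    moreover have "int s - int a + 1 \<le> 2 * l" "2 * l \<le> int s - int a + int q - 1"
      using r r_eq \<open>s \<in> {0, 1}\<close> by auto
    moreover have "L = ereal ((-1) ^ s * A ((of_int (4 * l + 2 * int a - 2 * int s - int q))^2 / (real q)^2))"
      using L reparametrized[OF r_eq \<open>s \<in> {0, 1}\<close>] by simp
    ultimately show "L \<in> ?rhs" by blast
  next
    fix L assume "L \<in> ?rhs"
    then obtain s l where s: "s \<in> {0, 1}" and bounds: "int s - int a + 1 \<le> 2 * l" "2 * l \<le> int s - int a + int q - 1"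
      and L: "L = ereal ((-1) ^ s * A ((of_int (4 * l + 2 * int a - 2 * int s - int q))^2 / (real q)^2))"
      by blast
    define r where "r = nat (2 * l + int a - int s)"
    have r_eq: "int r = 2 * l + int a - int s" unfolding r_def using bounds(1) by simp
    then have "0 < r" "r < q" using bounds by linarith+
    moreover have "L = ereal (limit_value q a r)"
      using L reparametrized[OF r_eq s] by simp
    ultimately show "L \<in> ?lhs" by blast
  qed
qed

theorem corollary4:
  fixes p q :: nat
  assumes "p > 0" and "q > 0" and "coprime p q" and "odd q"
    and "-1 < 2 * real p / real q - 1" and "2 * real p / real q - 1 < 1"
  shows "Oset (2 * real p / real q) =
      {ereal ((-1) ^ s * A ((of_int (4 * l + 2 * int p - 2 * int s - int q))^2 / (real q)^2)) | s l.
         s \<in> {0, 1} \<and> int s - int p + 1 \<le> 2 * l \<and> 2 * l \<le> int s - int p + int q - 1}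
    \<and> Eset (2 * real p / real q) =
      {ereal ((-1) ^ s * A ((of_int (4 * l - 2 * int s - int q))^2 / (real q)^2)) | s l.
         s \<in> {0, 1} \<and> int s + 1 \<le> 2 * l \<and> 2 * l \<le> int s + int q - 1}"
proof -
  have "p < q" using assms(2,6) by (simp add: field_simps)
  note limit_set = Dn_ratio_limit_set[OF assms(1) this assms(3,4)]
  have "Oset (2 * real p / real q) = {ereal (limit_value q p r) | r. 0 < r \<and> r < q}"
    using limit_set[of True] unfolding Oset_def by simp
  moreover have "Eset (2 * real p / real q) = {ereal (limit_value q 0 r) | r. 0 < r \<and> r < q}"
    using limit_set[of False] unfolding Eset_def by simp
  ultimately show ?thesis
    using limit_value_set_reparametrized[OF assms(2), of p] limit_value_set_reparametrized[OF assms(2), of 0]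
    by simp
qed

end
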